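(* Let $\mathcal A$ be a commutative semiring with negation map $(-)$. For all $A,B\in M_n(\mathcal A)$, $|A|\,|B|\preceq_\circ|AB|$.
   Context: A commutative semiring: commutative associative addition with neutral $\mathbb 0$, commutative associative multiplication with identity $\mathbb 1$, distributive, $x\mathbb 0=\mathbb 0$. Negation map: $(-):\mathcal A\to\mathcal A$ with $(-)(x+y)=(-)x+(-)y$, $(-)((-)x)=x$, $(-)(xy)=((-)x)y$. Write $x(-)y:=x+((-)y)$, $x^\circ:=x(-)x$; $x\preceq_\circ y$ iff $y=x+z^\circ$ for some $z\in\mathcal A$. For a permutation $\pi$, $(-)^\pi x=x$ if $\pi$ is even and $(-)x$ if odd. The $(-)$-determinant of $A=(a_{ij})$ is $|A|=\sum_{\pi\in S_n}(-)^\pi\prod_i a_{i,\pi(i)}$. *)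

theory Defs
  imports "HOL-Combinatorics.Permutations"
begin

definition negation_map :: "('a::{comm_semiring_0, comm_monoid_mult} \<Rightarrow> 'a) \<Rightarrow> bool" where
  "negation_map neg \<longleftrightarrow>
     (\<forall>x y. neg (x + y) = neg x + neg y) \<and>
     (\<forall>x. neg (neg x) = x) \<and>
     (\<forall>x y. neg (x * y) = neg x * y)"

definition circ :: "('a::comm_semiring_0 \<Rightarrow> 'a) \<Rightarrow> 'a \<Rightarrow> 'a" where
  "circ neg x = x + neg x"

definition circ_le :: "('a::comm_semiring_0 \<Rightarrow> 'a) \<Rightarrow> 'a \<Rightarrow> 'a \<Rightarrow> bool" where
  "circ_le neg x y \<longleftrightarrow> (\<exists>z. y = x + circ neg z)"

definition neg_pow :: "('a \<Rightarrow> 'a) \<Rightarrow> (nat \<Rightarrow> nat) \<Rightarrow> 'a \<Rightarrow> 'a" where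
  "neg_pow neg p x = (if evenperm p then x else neg x)"

definition neg_det :: "('a::{comm_semiring_0, comm_monoid_mult} \<Rightarrow> 'a) \<Rightarrow> nat \<Rightarrow> (nat \<Rightarrow> nat \<Rightarrow> 'a) \<Rightarrow> 'a" where
  "neg_det neg n A = (\<Sum>p\<in>{p. p permutes {..<n}}. neg_pow neg p (\<Prod>i<n. A i (p i)))"

definition mat_mult :: "nat \<Rightarrow> (nat \<Rightarrow> nat \<Rightarrow> 'a::comm_semiring_0) \<Rightarrow> (nat \<Rightarrow> nat \<Rightarrow> 'a) \<Rightarrow> nat \<Rightarrow> nat \<Rightarrow> 'a" where
  "mat_mult n A B = (\<lambda>i j. \<Sum>k<n. A i k * B k j)"

end

theory Submission
  imports Defs
begin

text \<open>
  Expanding the entries of \<open>AB\<close> and using multilinearity in the rows, \<open>|AB|\<close> is the sum over all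
  maps \<open>f\<close> from rows to columns of \<open>(\<Prod>i. a(i, f i)) |B_f|\<close>, where row \<open>i\<close> of \<open>B_f\<close> is row
  \<open>f i\<close> of \<open>B\<close>. For a permutation \<open>f\<close>, \<open>|B_f| = (-)\<^sup>f |B|\<close>, and these terms add up to \<open>|A| |B|\<close>.
  For a non-injective \<open>f\<close>, \<open>B_f\<close> has two equal rows; composing with their transposition pairs
  each even permutation with an odd one giving the same product, so \<open>|B_f|\<close> has the form
  \<open>z\<^sup>\<circ>\<close>. Lacking cancellation, these quasi-zero terms cannot be discarded, whence only
  \<open>|A| |B| \<preceq>\<^sub>\<circ> |AB|\<close>.
\<close>

definition quasi_zero :: "('a::comm_semiring_0 \<Rightarrow> 'a) \<Rightarrow> 'a \<Rightarrow> bool" where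
  "quasi_zero neg x \<longleftrightarrow> (\<exists>z. x = circ neg z)"

lemma circ_le_add_quasi_zero: "quasi_zero neg y \<Longrightarrow> circ_le neg x (x + y)"
  unfolding quasi_zero_def circ_le_def by blast

text \<open>The library's \<open>prod_sum_PiE\<close> needs \<open>comm_semiring_1\<close>, which excludes the trivial semiring.\<close>

lemma prod_sum_PiE_comm_semiring_0:
  fixes f :: "'a \<Rightarrow> 'b \<Rightarrow> 'c :: {comm_semiring_0, comm_monoid_mult}"
  assumes "finite A" and "\<And>x. x \<in> A \<Longrightarrow> finite (B x)"
  shows "(\<Prod>x\<in>A. \<Sum>y\<in>B x. f x y) = (\<Sum>g\<in>PiE A B. \<Prod>x\<in>A. f x (g x))"
  using assms
proof (induction A rule: finite_induct)
  case empty
  then show ?case by auto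
next
  case (insert x A)
  have "(\<Sum>g\<in>Pi\<^sub>E (insert x A) B. \<Prod>x\<in>insert x A. f x (g x)) =
        (\<Sum>(y, g)\<in>B x \<times> Pi\<^sub>E A B. f x y * (\<Prod>x'\<in>A. f x' (g x')))"
  proof (rule sum.reindex_bij_witness[of _ "\<lambda>(y, g). g(x := y)" "\<lambda>g. (g x, g(x := undefined))"])
    fix g assume "g \<in> Pi\<^sub>E (insert x A) B"
    show "(case (g x, g(x := undefined)) of (y, g) \<Rightarrow> f x y * (\<Prod>x'\<in>A. f x' (g x'))) =
        (\<Prod>x\<in>insert x A. f x (g x))"
    proof -
      have "(\<Prod>x'\<in>A. f x' ((g(x := undefined)) x')) = (\<Prod>x'\<in>A. f x' (g x'))"
        using insert.hyps by (intro prod.cong) auto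
      then show ?thesis
        using insert.hyps by simp
    qed
  qed (use insert.hyps in \<open>auto simp: PiE_def extensional_def\<close>)
  also have "\<dots> = (\<Sum>y\<in>B x. f x y) * (\<Sum>g\<in>Pi\<^sub>E A B. \<Prod>x'\<in>A. f x' (g x'))"
    by (simp add: sum.cartesian_product [symmetric] sum_distrib_left sum_distrib_right
        sum.swap[of _ "B x"])
  also have "\<dots> = (\<Prod>x\<in>insert x A. \<Sum>y\<in>B x. f x y)"
    using insert by simp
  finally show ?case ..
qed

lemma bij_betw_restrict_permutes:
  assumes "finite S"
  shows "bij_betw (\<lambda>p. restrict p S) {p. p permutes S} {f \<in> S \<rightarrow>\<^sub>E S. inj_on f S}"
proof (rule bij_betw_byWitness[where f' = "\<lambda>f. restrict_id f S"])
  show "\<forall>p\<in>{p. p permutes S}. restrict_id (restrict p S) S = p"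
    by (auto simp: fun_eq_iff restrict_id_def permutes_not_in)
  show "\<forall>f\<in>{f \<in> S \<rightarrow>\<^sub>E S. inj_on f S}. restrict (restrict_id f S) S = f"
    by (auto simp: fun_eq_iff extensional_def)
  show "(\<lambda>p. restrict p S) ` {p. p permutes S} \<subseteq> {f \<in> S \<rightarrow>\<^sub>E S. inj_on f S}"
    by (auto simp: permutes_in_image intro: permutes_inj_on)
  have "restrict_id f S permutes S" if "f \<in> S \<rightarrow>\<^sub>E S" "inj_on f S" for f
  proof (rule permutes_restrict_id)
    have "f ` S \<subseteq> S" using that(1) by auto
    with assms that(2) show "bij_betw f S S"
      by (simp add: bij_betw_def endo_inj_surj)
  qed
  then show "(\<lambda>f. restrict_id f S) ` {f \<in> S \<rightarrow>\<^sub>E S. inj_on f S} \<subseteq> {p. p permutes S}"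
    by auto
qed

lemma neg_det_cong:
  assumes "\<And>i j. i < n \<Longrightarrow> j < n \<Longrightarrow> M i j = N i j"
  shows "neg_det neg n M = neg_det neg n N"
  unfolding neg_det_def
  by (intro sum.cong prod.cong refl arg_cong[where f = "neg_pow neg _"])
     (metis assms lessThan_iff mem_Collect_eq permutes_in_image)

context
  fixes neg :: "'a::{comm_semiring_0, comm_monoid_mult} \<Rightarrow> 'a"
  assumes negation_map: "negation_map neg"
begin

lemma neg_add: "neg (x + y) = neg x + neg y"
  using negation_map unfolding negation_map_def by blast

lemma neg_neg: "neg (neg x) = x"
  using negation_map unfolding negation_map_def by blast

lemma neg_mult: "neg (x * y) = neg x * y"
  using negation_map unfolding negation_map_def by blast

lemma mult_neg: "x * neg y = neg (x * y)"
  by (metis mult.commute neg_mult)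

lemma neg_zero: "neg 0 = 0"
  by (metis mult_zero_right neg_mult)

lemma neg_sum: "neg (sum f A) = (\<Sum>x\<in>A. neg (f x))"
  by (induction A rule: infinite_finite_induct) (simp_all add: neg_zero neg_add)

lemma neg_pow_sum: "neg_pow neg p (sum f A) = (\<Sum>x\<in>A. neg_pow neg p (f x))"
  unfolding neg_pow_def by (simp add: neg_sum)

lemma mult_neg_pow: "c * neg_pow neg p x = neg_pow neg p (c * x)"
  unfolding neg_pow_def by (simp add: mult_neg)

lemma neg_pow_comp:
  assumes "permutation p" and "permutation q"
  shows "neg_pow neg (p \<circ> q) x = neg_pow neg q (neg_pow neg p x)"
  unfolding neg_pow_def evenperm_comp[OF assms] by (simp add: neg_neg)

lemma quasi_zero_mult: "quasi_zero neg y \<Longrightarrow> quasi_zero neg (c * y)"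
  unfolding quasi_zero_def circ_def by (metis distrib_left mult_neg)

lemma quasi_zero_sum:
  assumes "\<And>x. x \<in> A \<Longrightarrow> quasi_zero neg (f x)"
  shows "quasi_zero neg (sum f A)"
proof -
  obtain z where "\<And>x. x \<in> A \<Longrightarrow> f x = circ neg (z x)"
    using assms unfolding quasi_zero_def by metis
  then have "sum f A = circ neg (sum z A)"
    by (simp add: circ_def neg_sum sum.distrib)
  then show ?thesis
    unfolding quasi_zero_def ..
qed

lemma neg_det_scale_rows:
  "neg_det neg n (\<lambda>i j. c i * M i j) = (\<Prod>i<n. c i) * neg_det neg n M"
  unfolding neg_det_def by (simp add: prod.distrib sum_distrib_left mult_neg_pow)

lemma neg_det_mat_mult_expand:
  "neg_det neg n (mat_mult n A B) =
     (\<Sum>f\<in>{..<n} \<rightarrow>\<^sub>E {..<n}. neg_det neg n (\<lambda>i j. A i (f i) * B (f i) j))"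
proof -
  have "neg_det neg n (mat_mult n A B) =
      (\<Sum>p | p permutes {..<n}. \<Sum>f\<in>{..<n} \<rightarrow>\<^sub>E {..<n}.
         neg_pow neg p (\<Prod>i<n. A i (f i) * B (f i) (p i)))"
    unfolding neg_det_def mat_mult_def
    by (simp add: prod_sum_PiE_comm_semiring_0 neg_pow_sum)
  then show ?thesis
    unfolding neg_det_def by (simp add: sum.swap[where A = "{p. p permutes _}"])
qed

lemma neg_det_permute_rows:
  assumes s: "s permutes {..<n}"
  shows "neg_det neg n (\<lambda>i. M (s i)) = neg_pow neg s (neg_det neg n M)"
proof -
  have perm: "permutation p" if "p permutes {..<n}" for p
    using that by (rule permutes_imp_permutation[OF finite_lessThan])
  have "neg_det neg n (\<lambda>i. M (s i)) =
      (\<Sum>t | t permutes {..<n}. neg_pow neg (t \<circ> s) (\<Prod>i<n. M (s i) (t (s i))))"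
    unfolding neg_det_def by (subst sum_permutations_compose_right[OF s]) simp
  also have "\<dots> = (\<Sum>t | t permutes {..<n}. neg_pow neg s (neg_pow neg t (\<Prod>j<n. M j (t j))))"
  proof (rule sum.cong[OF refl])
    fix t assume "t \<in> {t. t permutes {..<n}}"
    then have "neg_pow neg (t \<circ> s) x = neg_pow neg s (neg_pow neg t x)" for x
      by (simp add: neg_pow_comp perm s)
    moreover have "(\<Prod>i<n. M (s i) (t (s i))) = (\<Prod>j<n. M j (t j))"
      using prod.permute[OF s, of "\<lambda>j. M j (t j)"] by simp
    ultimately show "neg_pow neg (t \<circ> s) (\<Prod>i<n. M (s i) (t (s i))) =
        neg_pow neg s (neg_pow neg t (\<Prod>j<n. M j (t j)))"
      by simp
  qed
  also have "\<dots> = neg_pow neg s (neg_det neg n M)"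
    unfolding neg_det_def by (simp add: neg_pow_sum)
  finally show ?thesis .
qed

lemma quasi_zero_neg_det_equal_rows:
  assumes ij: "i < n" "j < n" "i \<noteq> j" and rows: "M i = M j"
  shows "quasi_zero neg (neg_det neg n M)"
proof -
  let ?P = "{p. p permutes {..<n}}" and ?t = "transpose i j"
  let ?g = "\<lambda>p. \<Prod>k<n. M k (p k)"
  have t: "?t permutes {..<n}"
    using ij by (simp add: permutes_swap_id)
  have odd_comp: "evenperm (p \<circ> ?t) \<longleftrightarrow> \<not> evenperm p" if "p permutes {..<n}" for p
    using evenperm_comp[OF permutes_imp_permutation[OF finite_lessThan that]
        permutes_imp_permutation[OF finite_lessThan t]] ij
    by (simp add: evenperm_swap)
  have g_comp: "(\<Prod>k<n. M k (p (?t k))) = ?g p" if "p permutes {..<n}" for p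
  proof -
    have "(\<Prod>k<n. M k (p (?t k))) = (\<Prod>k<n. M (?t k) (p (?t k)))"
      using rows by (intro prod.cong) (auto simp: transpose_def)
    also have "\<dots> = ?g p"
      using prod.permute[OF t, of "\<lambda>k. M k (p k)"] by simp
    finally show ?thesis .
  qed
  define even_part where "even_part = (\<Sum>p\<in>?P. if evenperm p then ?g p else 0)"
  have "(\<Sum>p\<in>?P. if evenperm p then 0 else ?g p) =
        (\<Sum>p\<in>?P. if evenperm (p \<circ> ?t) then 0 else ?g (p \<circ> ?t))"
    by (rule sum_permutations_compose_right[OF t])
  also have "\<dots> = even_part"
    unfolding even_part_def by (rule sum.cong) (auto simp: odd_comp g_comp)
  finally have odd_part: "(\<Sum>p\<in>?P. if evenperm p then 0 else ?g p) = even_part" .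
  have "neg_det neg n M =
      (\<Sum>p\<in>?P. (if evenperm p then ?g p else 0) + neg (if evenperm p then 0 else ?g p))"
    unfolding neg_det_def by (rule sum.cong) (auto simp: neg_pow_def neg_zero)
  also have "\<dots> = circ neg even_part"
    by (simp add: sum.distrib neg_sum[symmetric] odd_part circ_def even_part_def)
  finally show ?thesis
    unfolding quasi_zero_def ..
qed

lemma sum_permutes_neg_det_rows:
  "(\<Sum>s | s permutes {..<n}. neg_det neg n (\<lambda>i j. A i (s i) * B (s i) j)) =
     neg_det neg n A * neg_det neg n B"
proof -
  have "neg_det neg n (\<lambda>i j. A i (s i) * B (s i) j) =
      neg_pow neg s (\<Prod>i<n. A i (s i)) * neg_det neg n B" if "s permutes {..<n}" for s
    using that
    by (simp add: neg_det_scale_rows neg_det_permute_rows mult_neg_pow mult.commute[of _ "neg_det neg n B"])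
  then show ?thesis
    unfolding neg_det_def[of neg n A] by (simp add: sum_distrib_right)
qed

end

theorem theorem8p22:
  fixes neg :: "'a::{comm_semiring_0, comm_monoid_mult} \<Rightarrow> 'a"
    and n :: nat and A B :: "nat \<Rightarrow> nat \<Rightarrow> 'a"
  assumes "negation_map neg"
  shows "circ_le neg (neg_det neg n A * neg_det neg n B) (neg_det neg n (mat_mult n A B))"
proof -
  let ?S = "{..<n}"
  let ?C = "\<lambda>f. neg_det neg n (\<lambda>i j. A i (f i) * B (f i) j)"
  define I where "I = {f \<in> ?S \<rightarrow>\<^sub>E ?S. inj_on f ?S}"
  have "neg_det neg n (mat_mult n A B) = sum ?C I + sum ?C ((?S \<rightarrow>\<^sub>E ?S) - I)"
    unfolding neg_det_mat_mult_expand[OF assms] I_def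
    by (subst sum.subset_diff[of I]) (auto simp: I_def finite_PiE add.commute)
  moreover have "sum ?C I = neg_det neg n A * neg_det neg n B"
  proof -
    have "sum ?C I = (\<Sum>s | s permutes ?S. ?C (restrict s ?S))"
      unfolding I_def by (rule sum.reindex_bij_betw[symmetric, OF bij_betw_restrict_permutes]) simp
    also have "\<dots> = (\<Sum>s | s permutes ?S. ?C s)"
      by (intro sum.cong refl neg_det_cong) simp
    finally show ?thesis
      using sum_permutes_neg_det_rows[OF assms] by simp
  qed
  moreover have "quasi_zero neg (sum ?C ((?S \<rightarrow>\<^sub>E ?S) - I))"
  proof (rule quasi_zero_sum[OF assms])
    fix f assume "f \<in> (?S \<rightarrow>\<^sub>E ?S) - I"
    then have "\<not> inj_on f ?S"
      unfolding I_def by auto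
    then obtain i j where "i < n" "j < n" "i \<noteq> j" "f i = f j"
      unfolding inj_on_def by auto
    then have "quasi_zero neg (neg_det neg n (\<lambda>k l. B (f k) l))"
      by (intro quasi_zero_neg_det_equal_rows[OF assms, of i n j]) auto
    then show "quasi_zero neg (?C f)"
      by (simp add: neg_det_scale_rows[OF assms] quasi_zero_mult[OF assms])
  qed
  ultimately show ?thesis
    by (simp add: circ_le_add_quasi_zero)
qed

end
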